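(* Let $\texttt{P}$ be a distributed protocol and $\mathcal{C}$ a valid interpretation, with $\mathcal{A}_\mathcal{C}^\texttt{P} = (\Sigma_\mathcal{C}, \Sigma_0^\mathcal{C}, \delta_\mathcal{C})$. Suppose that for every valid interpretation $\mathcal{L}$, with $\mathcal{A}_\mathcal{L}^\texttt{P} = (\Sigma_\mathcal{L}, \Sigma_0^\mathcal{L}, \delta_\mathcal{L})$, there exists a relation $\gamma_\mathcal{L} \subseteq \Sigma_\mathcal{L}\times\Sigma_\mathcal{C}$ satisfying: (init) for every $\sigma_\mathcal{L}\in\Sigma_0^\mathcal{L}$ there is $\sigma_\mathcal{C}\in\Sigma_0^\mathcal{C}$ with $(\sigma_\mathcal{L},\sigma_\mathcal{C})\in\gamma_\mathcal{L}$; (first-step) for all $\sigma_\mathcal{L},\sigma'_\mathcal{L}\in\Sigma_\mathcal{L}$, every label $a$, and all $\sigma_\mathcal{C}\in\Sigma_\mathcal{C}$, if $(\sigma_\mathcal{L},\sigma_\mathcal{C})\in\gamma_\mathcal{L}$, $(\sigma_\mathcal{L},a,\sigma'_\mathcal{L})\in\delta_\mathcal{L}$ and $\sigma_\mathcal{L}\models\Phi$, then there exists $\sigma'_\mathcal{C}\in\Sigma_\mathcal{C}$ with $(\sigma_\mathcal{C},\sigma'_\mathcal{C})\in\delta_\mathcal{C}^*$ and $(\sigma'_\mathcal{L},\sigma'_\mathcal{C})\in\gamma_\mathcal{L}$; (safety) for all $\sigma_\mathcal{L}\in\Sigma_\mathcal{L}$ and $\sigma_\mathcal{C}\in\Sigma_\mathcal{C}$,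 if $(\sigma_\mathcal{L},\sigma_\mathcal{C})\in\gamma_\mathcal{L}$ and $\sigma_\mathcal{L}\models\neg\Phi$, then $\sigma_\mathcal{C}\models\neg\Phi$. Then $\mathcal{C}$ is a cut-off instance of $\texttt{P}$.
   Context: A distributed protocol is $\texttt{P} = \langle \texttt{D}, \texttt{R}, \texttt{F}, \Psi, \texttt{A}, \Phi\rangle$: sort names $\texttt{D}$, relation names $\texttt{R}$ and function names $\texttt{F}$ with signatures over the sorts, first-order axioms $\Psi$, a first-order formula $\Psi_0$ constraining initial states, actions $\texttt{A}$, and a universally quantified first-order safety property $\Phi$. Each action $\texttt{a}(\bar{\texttt{v}}:\bar{\texttt{d}}) = \langle g(\bar{\texttt{v}}), u(\bar{\texttt{v}})\rangle$ has a guard formula $g$ and an update formula $u$ over unprimed and primed vocabulary. A valid interpretation $\mathcal{I}$ assigns to each sort a finite domain such that $\Psi$ holds; it induces the transition system $\mathcal{A}_\mathcal{I}^\texttt{P} = (\Sigma,\Sigma_0,\delta)$ where states interpret all relation/function names over these domains, $\Sigma_0=\{\sigma\mid\sigma\models\Psi_0\}$, and $\delta=\bigcup_{\texttt{a}}\{(\sigma,\texttt{a}(\bar x),\sigma')\mid \bar x\in\mathcal{I}(\bar{\texttt{d}}),\ \sigma\models g[\bar x/\bar{\texttt{v}}],\ (\sigma,\sigma')\models u[\bar x/\bar{\texttt{v}}]\}$. $\delta^*$ is the reflexive–transitive closure of $\delta$ (ignoring labels): $(\sigma,\sigma')\in\delta^*$ iff there is a sequence of $n\ge 0$ transitions from $\sigma$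 to $\sigma'$. A state is reachable if it ends a finite sequence starting in $\Sigma_0$ following $\delta$. $\mathcal{A}_\mathcal{I}^\texttt{P}$ is safe if every reachable state satisfies $\Phi$. A cut-off instance of $\texttt{P}$ is a valid interpretation $\mathcal{C}$ such that if $\mathcal{A}_\mathcal{C}^\texttt{P}$ is safe then $\mathcal{A}_\mathcal{L}^\texttt{P}$ is safe for every valid interpretation $\mathcal{L}$. *)

theory Defs
  imports Main
begin

text \<open>The boolean flag on symbol occurrences says
  whether the primed (post-state) copy of the symbol is meant.\<close>

datatype ('s, 'f, 'v) trm =
    Var 'v 's
  | Fn bool 'f "('s, 'f, 'v) trm list"

datatype ('s, 'r, 'f, 'v) fml =
    FTrue
  | Rel bool 'r "('s, 'f, 'v) trm list"
  | Eq "('s, 'f, 'v) trm" "('s, 'f, 'v) trm"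
  | Neg "('s, 'r, 'f, 'v) fml"
  | Conj "('s, 'r, 'f, 'v) fml" "('s, 'r, 'f, 'v) fml"
  | Disj "('s, 'r, 'f, 'v) fml" "('s, 'r, 'f, 'v) fml"
  | Imp "('s, 'r, 'f, 'v) fml" "('s, 'r, 'f, 'v) fml"
  | Forall 'v 's "('s, 'r, 'f, 'v) fml"
  | Exists 'v 's "('s, 'r, 'f, 'v) fml"

fun qfree :: "('s, 'r, 'f, 'v) fml \<Rightarrow> bool" where
  "qfree (Forall v s p) = False"
| "qfree (Exists v s p) = False"
| "qfree (Neg p) = qfree p"
| "qfree (Conj p q) = (qfree p \<and> qfree q)"
| "qfree (Disj p q) = (qfree p \<and> qfree q)"
| "qfree (Imp p q) = (qfree p \<and> qfree q)"
| "qfree _ = True"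

fun universal :: "('s, 'r, 'f, 'v) fml \<Rightarrow> bool" where
  "universal (Forall v s p) = universal p"
| "universal p = qfree p"

record ('s, 'r, 'f, 'v, 'a) protocol =
  rel_sig :: "'r \<Rightarrow> 's list"
  fun_sig :: "'f \<Rightarrow> 's list \<times> 's"
  axioms  :: "('s, 'r, 'f, 'v) fml"
  init    :: "('s, 'r, 'f, 'v) fml"
  actions :: "'a set"
  params  :: "'a \<Rightarrow> ('v \<times> 's) list"
  guard   :: "'a \<Rightarrow> ('s, 'r, 'f, 'v) fml"
  upd     :: "'a \<Rightarrow> ('s, 'r, 'f, 'v) fml"
  safety  :: "('s, 'r, 'f, 'v) fml"

text \<open>Domain elements are drawn from nat. An interpretation assigns to each
  sort a set of elements (its domain).\<close>

type_synonym 's interp = "'s \<Rightarrow> nat set"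

record ('r, 'f) state =
  rel_of :: "'r \<Rightarrow> nat list \<Rightarrow> bool"
  fn_of  :: "'f \<Rightarrow> nat list \<Rightarrow> nat"

definition in_doms :: "'s interp \<Rightarrow> 's list \<Rightarrow> nat list \<Rightarrow> bool" where
  "in_doms I ss xs \<longleftrightarrow> length xs = length ss \<and> (\<forall>i < length ss. xs ! i \<in> I (ss ! i))"

text \<open>Outside of the domains the representation is
  normalised (False resp. 0), so states correspond one-to-one to structures.\<close>
definition is_state :: "('s, 'r, 'f, 'v, 'a) protocol \<Rightarrow> 's interp \<Rightarrow> ('r, 'f) state \<Rightarrow> bool" where
  "is_state P I \<sigma> \<longleftrightarrow>
     (\<forall>r xs. rel_of \<sigma> r xs \<longrightarrow> in_doms I (rel_sig P r) xs) \<and>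
     (\<forall>f xs. if in_doms I (fst (fun_sig P f)) xs
              then fn_of \<sigma> f xs \<in> I (snd (fun_sig P f))
              else fn_of \<sigma> f xs = 0)"

definition states :: "('s, 'r, 'f, 'v, 'a) protocol \<Rightarrow> 's interp \<Rightarrow> ('r, 'f) state set" where
  "states P I = {\<sigma>. is_state P I \<sigma>}"

fun eval :: "('r, 'f) state \<Rightarrow> ('r, 'f) state \<Rightarrow> ('v \<times> 's \<Rightarrow> nat) \<Rightarrow> ('s, 'f, 'v) trm \<Rightarrow> nat" where
  "eval \<sigma> \<sigma>' \<rho> (Var v s) = \<rho> (v, s)"
| "eval \<sigma> \<sigma>' \<rho> (Fn p f ts) = fn_of (if p then \<sigma>' else \<sigma>) f (map (eval \<sigma> \<sigma>' \<rho>) ts)"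

fun sat :: "'s interp \<Rightarrow> ('r, 'f) state \<Rightarrow> ('r, 'f) state \<Rightarrow> ('v \<times> 's \<Rightarrow> nat)
             \<Rightarrow> ('s, 'r, 'f, 'v) fml \<Rightarrow> bool" where
  "sat I \<sigma> \<sigma>' \<rho> FTrue = True"
| "sat I \<sigma> \<sigma>' \<rho> (Rel p r ts) = rel_of (if p then \<sigma>' else \<sigma>) r (map (eval \<sigma> \<sigma>' \<rho>) ts)"
| "sat I \<sigma> \<sigma>' \<rho> (Eq t u) = (eval \<sigma> \<sigma>' \<rho> t = eval \<sigma> \<sigma>' \<rho> u)"
| "sat I \<sigma> \<sigma>' \<rho> (Neg p) = (\<not> sat I \<sigma> \<sigma>' \<rho> p)"
| "sat I \<sigma> \<sigma>' \<rho> (Conj p q) = (sat I \<sigma> \<sigma>' \<rho> p \<and> sat I \<sigma> \<sigma>' \<rho> q)"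
| "sat I \<sigma> \<sigma>' \<rho> (Disj p q) = (sat I \<sigma> \<sigma>' \<rho> p \<or> sat I \<sigma> \<sigma>' \<rho> q)"
| "sat I \<sigma> \<sigma>' \<rho> (Imp p q) = (sat I \<sigma> \<sigma>' \<rho> p \<longrightarrow> sat I \<sigma> \<sigma>' \<rho> q)"
| "sat I \<sigma> \<sigma>' \<rho> (Forall v s p) = (\<forall>d \<in> I s. sat I \<sigma> \<sigma>' (\<rho>((v, s) := d)) p)"
| "sat I \<sigma> \<sigma>' \<rho> (Exists v s p) = (\<exists>d \<in> I s. sat I \<sigma> \<sigma>' (\<rho>((v, s) := d)) p)"

text \<open>Valuation assigning the actual values xs to the formal parameters ps
  (all other variables get a dummy value; they do not occur free in the
  well-formed formulas of a protocol).\<close>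
definition env :: "('v \<times> 's) list \<Rightarrow> nat list \<Rightarrow> ('v \<times> 's \<Rightarrow> nat)" where
  "env ps xs = (\<lambda>x. case map_of (zip ps xs) x of Some d \<Rightarrow> d | None \<Rightarrow> 0)"

definition models :: "'s interp \<Rightarrow> ('r, 'f) state \<Rightarrow> ('s, 'r, 'f, 'v) fml \<Rightarrow> bool" where
  "models I \<sigma> \<phi> \<longleftrightarrow> sat I \<sigma> \<sigma> (env [] []) \<phi>"

text \<open>Valid interpretation: every sort gets a finite domain and the axioms
  \<Psi> hold.  (\<Psi> is evaluated with its relation/function symbols read in some
  state of I; for axioms that only speak about the sorts this is simply truth.)\<close>
definition valid_interp :: "('s, 'r, 'f, 'v, 'a) protocol \<Rightarrow> 's interp \<Rightarrow> bool" where
  "valid_interp P I \<longleftrightarrow> (\<forall>s. finite (I s)) \<and> (\<exists>\<sigma> \<in> states P I. models I \<sigma> (axioms P))"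

definition init_states :: "('s, 'r, 'f, 'v, 'a) protocol \<Rightarrow> 's interp \<Rightarrow> ('r, 'f) state set" where
  "init_states P I = {\<sigma> \<in> states P I. models I \<sigma> (init P)}"

definition delta :: "('s, 'r, 'f, 'v, 'a) protocol \<Rightarrow> 's interp
                     \<Rightarrow> (('r, 'f) state \<times> ('a \<times> nat list) \<times> ('r, 'f) state) set" where
  "delta P I = {(\<sigma>, (a, xs), \<sigma>'). a \<in> actions P \<and> \<sigma> \<in> states P I \<and> \<sigma>' \<in> states P I \<and>
      in_doms I (map snd (params P a)) xs \<and>
      sat I \<sigma> \<sigma> (env (params P a) xs) (guard P a) \<and>
      sat I \<sigma> \<sigma>' (env (params P a) xs) (upd P a)}"

text \<open>Unlabelled step relation; its reflexive-transitive closure is delta-star.\<close>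
definition step :: "('s, 'r, 'f, 'v, 'a) protocol \<Rightarrow> 's interp \<Rightarrow> (('r, 'f) state \<times> ('r, 'f) state) set" where
  "step P I = {(\<sigma>, \<sigma>'). \<exists>l. (\<sigma>, l, \<sigma>') \<in> delta P I}"

definition reachable :: "('s, 'r, 'f, 'v, 'a) protocol \<Rightarrow> 's interp \<Rightarrow> ('r, 'f) state set" where
  "reachable P I = {\<sigma>'. \<exists>\<sigma> \<in> init_states P I. (\<sigma>, \<sigma>') \<in> (step P I)\<^sup>*}"

definition safe :: "('s, 'r, 'f, 'v, 'a) protocol \<Rightarrow> 's interp \<Rightarrow> bool" where
  "safe P I \<longleftrightarrow> (\<forall>\<sigma> \<in> reachable P I. models I \<sigma> (safety P))"

definition cutoff_instance :: "('s, 'r, 'f, 'v, 'a) protocol \<Rightarrow> 's interp \<Rightarrow> bool" where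
  "cutoff_instance P C \<longleftrightarrow> valid_interp P C \<and>
     (safe P C \<longrightarrow> (\<forall>L. valid_interp P L \<longrightarrow> safe P L))"

end

theory Submission
  imports Defs
begin

(* Every L-reachable state is related by \<gamma> to a C-reachable state, by induction
   along the path: C-reachable states are safe, so by reflection of violations
   the related L-state is safe too, which is what the first-step condition
   requires.  Reflection of violations then transfers safety from C to L. *)

lemma models_Neg [simp]: "models I \<sigma> (Neg \<phi>) \<longleftrightarrow> \<not> models I \<sigma> \<phi>"
  by (simp add: models_def)

lemma reachable_eq_Image: "reachable P I = (step P I)\<^sup>* `` init_states P I"
  by (auto simp: reachable_def)

lemma step_iff_delta: "(\<sigma>, \<sigma>') \<in> step P I \<longleftrightarrow> (\<exists>l. (\<sigma>, l, \<sigma>') \<in> delta P I)"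
  by (simp add: step_def)

lemma simulation_reachable:
  assumes init: "\<forall>x \<in> I. \<exists>y \<in> J. (x, y) \<in> \<gamma>"
    and sim: "\<And>x y x'. (x, y) \<in> \<gamma> \<Longrightarrow> y \<in> S\<^sup>* `` J \<Longrightarrow> (x, x') \<in> R \<Longrightarrow>
                \<exists>y'. (y, y') \<in> S\<^sup>* \<and> (x', y') \<in> \<gamma>"
    and x: "x \<in> R\<^sup>* `` I"
  shows "\<exists>y \<in> S\<^sup>* `` J. (x, y) \<in> \<gamma>"
proof -
  from x obtain x0 where x0: "x0 \<in> I" and "(x0, x) \<in> R\<^sup>*" by blast
  from \<open>(x0, x) \<in> R\<^sup>*\<close> show ?thesis
  proof (induction rule: rtrancl_induct)
    case base
    with init x0 show ?case by blast
  next
    case (step x x')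
    then obtain y where y: "y \<in> S\<^sup>* `` J" "(x, y) \<in> \<gamma>" by blast
    with sim step.hyps(2) obtain y' where "(y, y') \<in> S\<^sup>*" "(x', y') \<in> \<gamma>" by blast
    moreover from y(1) \<open>(y, y') \<in> S\<^sup>*\<close> have "y' \<in> S\<^sup>* `` J"
      by (auto intro: rtrancl_trans)
    ultimately show ?case by blast
  qed
qed

lemma safe_if_simulated:
  assumes related_states: "\<gamma> \<subseteq> states P L \<times> states P C"
    and init: "\<forall>\<sigma>L \<in> init_states P L. \<exists>\<sigma>C \<in> init_states P C. (\<sigma>L, \<sigma>C) \<in> \<gamma>"
    and first_step: "\<And>\<sigma>L \<sigma>L' l \<sigma>C. \<sigma>L \<in> states P L \<Longrightarrow> \<sigma>L' \<in> states P L \<Longrightarrow> \<sigma>C \<in> states P C \<Longrightarrow>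
        (\<sigma>L, \<sigma>C) \<in> \<gamma> \<Longrightarrow> (\<sigma>L, l, \<sigma>L') \<in> delta P L \<Longrightarrow> models L \<sigma>L (safety P) \<Longrightarrow>
        \<exists>\<sigma>C' \<in> states P C. (\<sigma>C, \<sigma>C') \<in> (step P C)\<^sup>* \<and> (\<sigma>L', \<sigma>C') \<in> \<gamma>"
    and reflects_violation: "\<And>\<sigma>L \<sigma>C. \<sigma>L \<in> states P L \<Longrightarrow> \<sigma>C \<in> states P C \<Longrightarrow>
        (\<sigma>L, \<sigma>C) \<in> \<gamma> \<Longrightarrow> models L \<sigma>L (Neg (safety P)) \<Longrightarrow> models C \<sigma>C (Neg (safety P))"
    and safeC: "safe P C"
  shows "safe P L"
proof -
  have safe_related: "models L \<sigma>L (safety P)"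
    if related: "(\<sigma>L, \<sigma>C) \<in> \<gamma>" and reachable: "\<sigma>C \<in> reachable P C" for \<sigma>L \<sigma>C
  proof (rule ccontr)
    assume "\<not> models L \<sigma>L (safety P)"
    moreover from related related_states have "\<sigma>L \<in> states P L" "\<sigma>C \<in> states P C" by auto
    ultimately have "\<not> models C \<sigma>C (safety P)"
      using related reflects_violation by simp
    with safeC reachable show False by (simp add: safe_def)
  qed
  have "\<exists>\<sigma>C \<in> reachable P C. (\<sigma>L, \<sigma>C) \<in> \<gamma>" if "\<sigma>L \<in> reachable P L" for \<sigma>L
    using init _ that unfolding reachable_eq_Image
  proof (rule simulation_reachable)
    fix x y x'
    assume related: "(x, y) \<in> \<gamma>" and reachable: "y \<in> (step P C)\<^sup>* `` init_states P C"
      and "(x, x') \<in> step P L"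
    then obtain l where transition: "(x, l, x') \<in> delta P L" by (auto simp: step_iff_delta)
    then have "x \<in> states P L" "x' \<in> states P L" by (auto simp: delta_def)
    moreover from related related_states have "y \<in> states P C" by auto
    moreover from related reachable have "models L x (safety P)"
      by (simp add: safe_related reachable_eq_Image)
    ultimately show "\<exists>y'. (y, y') \<in> (step P C)\<^sup>* \<and> (x', y') \<in> \<gamma>"
      using first_step related transition by (meson rtrancl_refl)
  qed
  with safe_related show ?thesis unfolding safe_def by blast
qed

theorem lemma1:
  fixes P :: "('s, 'r, 'f, 'v, 'a) protocol" and C :: "'s interp"
  assumes univ: "universal (safety P)"
    and validC: "valid_interp P C"
    and sim: "\<forall>L. valid_interp P L \<longrightarrow>
      (\<exists>\<gamma> :: (('r, 'f) state \<times> ('r, 'f) state) set.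
         \<gamma> \<subseteq> states P L \<times> states P C \<and>
         (\<forall>\<sigma>L \<in> init_states P L. \<exists>\<sigma>C \<in> init_states P C. (\<sigma>L, \<sigma>C) \<in> \<gamma>) \<and>
         (\<forall>\<sigma>L \<in> states P L. \<forall>\<sigma>L' \<in> states P L. \<forall>a. \<forall>\<sigma>C \<in> states P C.
            (\<sigma>L, \<sigma>C) \<in> \<gamma> \<and> (\<sigma>L, a, \<sigma>L') \<in> delta P L \<and> models L \<sigma>L (safety P) \<longrightarrow>
            (\<exists>\<sigma>C' \<in> states P C. (\<sigma>C, \<sigma>C') \<in> (step P C)\<^sup>* \<and> (\<sigma>L', \<sigma>C') \<in> \<gamma>)) \<and>
         (\<forall>\<sigma>L \<in> states P L. \<forall>\<sigma>C \<in> states P C.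
            (\<sigma>L, \<sigma>C) \<in> \<gamma> \<and> models L \<sigma>L (Neg (safety P)) \<longrightarrow> models C \<sigma>C (Neg (safety P))))"
  shows "cutoff_instance P C"
  \<comment> \<open>univ is unused: universality of the safety property only matters for constructing \<gamma>.\<close>
proof -
  have "safe P L" if "safe P C" and validL: "valid_interp P L" for L
    using sim[rule_format, OF validL] that(1)
    by (elim exE conjE) (erule safe_if_simulated; blast)
  with validC show ?thesis by (simp add: cutoff_instance_def)
qed

end
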